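(* Let $n\ge0$ and $\gamma$ a composition of $n$. Then $$\blacktriangle(\kappa_{\mathrm{set}(\gamma)}(\nu))=\sum_{\alpha\odot\beta=\gamma}\kappa_{\mathrm{set}(\alpha)}(\nu)\otimes\kappa_{\mathrm{set}(\beta)}(\nu),$$ the sum over all pairs of compositions $(\alpha,\beta)$ (possibly empty) with $\alpha\odot\beta=\gamma$.
   Context: Fix an integer $\nu>1$; $C_\nu$ is the additive cyclic group of order $\nu$; $[a,b]=\{t\in\mathbb Z:a\le t\le b\}$ (empty if $a>b$), $[n]=[1,n]$; $Q_n(\nu)=\bigoplus_{i\in[n-1]}C_\nu$ (trivial if $n\le1$). For $K\subseteq[n-1]$, $\kappa_K(\nu)$ is the function on $Q_n(\nu)$ equal to $1$ at $\mathbf g$ if $\{i:g_i\ne0\}=K$ and $0$ otherwise (for $n\le1$, $\kappa_\emptyset(\nu)$ is the constant $1$). Compositions: for a composition $\alpha=(\alpha_1,\dots,\alpha_l)$ of $n$, $\mathrm{set}(\alpha)=\{\alpha_1,\alpha_1+\alpha_2,\dots,\alpha_1+\dots+\alpha_{l-1}\}\subseteq[n-1]$, and $\kappa_{\mathrm{set}(\alpha)}(\nu)$ lives on $Q_{|\alpha|}(\nu)$; the empty composition has size $0$ and empty set. Near-concatenation: $(\alpha_1,\dots,\alpha_l)\odot(\beta_1,\dots,\beta_k)=(\alpha_1,\dots,\alpha_l+\beta_1,\beta_2,\dots,\beta_k)$, with $\emptyset\odot\beta=\beta$ and $\alpha\odot\emptyset=\alpha$. Coproduct: for a function $\phi$ on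 $Q_n(\nu)$, $\blacktriangle_0(\phi)=1\otimes\phi$, $\blacktriangle_n(\phi)=\phi\otimes1$, and for $1\le k\le n-1$, $\blacktriangle_k(\phi)\in\mathrm{Fun}(Q_k(\nu))\otimes\mathrm{Fun}(Q_{n-k}(\nu))$ corresponds under the canonical isomorphism to $(\mathbf a,\mathbf b)\mapsto\phi(a_1,\dots,a_{k-1},0,b_1,\dots,b_{n-k-1})$; $\blacktriangle=\sum_{k=0}^n\blacktriangle_k$. *)

theory Defs
  imports Main
begin

text \<open>Elements of Q_m(nu) = direct sum over i in [m-1] of C_nu are encoded as lists
  g = [g_1, ..., g_{m-1}] of residues in {0..<nu} (the empty list when m <= 1).\<close>
definition Q :: "nat \<Rightarrow> nat \<Rightarrow> nat list set" where
  "Q \<nu> m = {g. length g = m - 1 \<and> (\<forall>x\<in>set g. x < \<nu>)}"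

definition kappa :: "nat set \<Rightarrow> nat list \<Rightarrow> 'r::comm_ring_1" where
  "kappa K g = (if {i \<in> {1..length g}. g ! (i - 1) \<noteq> 0} = K then 1 else 0)"

definition is_comp :: "nat list \<Rightarrow> bool" where
  "is_comp \<alpha> \<longleftrightarrow> (\<forall>x\<in>set \<alpha>. 0 < x)"

definition comp_set :: "nat list \<Rightarrow> nat set" where
  "comp_set \<alpha> = {sum_list (take i \<alpha>) | i. 1 \<le> i \<and> i < length \<alpha>}"

definition near_concat :: "nat list \<Rightarrow> nat list \<Rightarrow> nat list" where
  "near_concat \<alpha> \<beta> =
     (if \<alpha> = [] then \<beta> else if \<beta> = [] then \<alpha>
      else butlast \<alpha> @ [last \<alpha> + hd \<beta>] @ tl \<beta>)"

text \<open>The degree-k component of the coproduct of a function phi on Q_n(nu), viewed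
  (via the canonical isomorphism Fun(Q_k) \<otimes> Fun(Q_{n-k}) = Fun(Q_k \<times> Q_{n-k}))
  as a function of (a, b) with a \<in> Q_k(nu), b \<in> Q_{n-k}(nu).\<close>
definition coprod_k :: "nat \<Rightarrow> (nat list \<Rightarrow> 'r) \<Rightarrow> nat \<Rightarrow> nat list \<Rightarrow> nat list \<Rightarrow> 'r" where
  "coprod_k n \<phi> k a b =
     (if k = 0 then \<phi> b else if k = n then \<phi> a else \<phi> (a @ [0] @ b))"

end

theory Submission
  imports Defs
begin

text \<open>For 0 < k < n the degree-k part of the coproduct evaluates kappa_set(gamma) at
  a 0 b, whose support is supp a \<union> (k + supp b) with supp a \<subseteq> [1, k - 1]; in particular k
  is not in it. A splitting gamma = alpha \<odot> beta with |alpha| = k is unique, and it exists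
  iff k \<notin> set(gamma), in which case set(gamma) = set(alpha) \<union> (k + set(beta)). Since the two
  pieces lie below and above k, the condition supp(a 0 b) = set(gamma) then splits into
  supp a = set(alpha) and supp b = set(beta). For k = 0 and k = n the only splittings are
  ([], gamma) and (gamma, []).\<close>

definition supp :: "nat list \<Rightarrow> nat set" where
  "supp g = {i \<in> {1..length g}. g ! (i - 1) \<noteq> 0}"

lemma kappa_conv_supp: "kappa K g = (if supp g = K then 1 else 0)"
  by (simp add: kappa_def supp_def)

lemma supp_subset: "supp g \<subseteq> {1..length g}"
  by (auto simp: supp_def)

lemma supp_append_zero: "supp (a @ 0 # b) = supp a \<union> (+) (Suc (length a)) ` supp b"
proof (rule set_eqI)
  fix i
  show "i \<in> supp (a @ 0 # b) \<longleftrightarrow> i \<in> supp a \<union> (+) (Suc (length a)) ` supp b"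
    by (cases "i \<le> Suc (length a)")
      (auto simp: supp_def nth_append image_iff le_Suc_eq Suc_le_eq intro!: exI[of _ "i - Suc (length a)"])
qed

lemma is_comp_Cons [simp]: "is_comp (x # xs) \<longleftrightarrow> 0 < x \<and> is_comp xs"
  by (simp add: is_comp_def)

lemma is_comp_Nil [simp]: "is_comp []"
  by (simp add: is_comp_def)

lemma comp_sum_list_pos: "is_comp \<alpha> \<Longrightarrow> \<alpha> \<noteq> [] \<Longrightarrow> 0 < sum_list \<alpha>"
  by (cases \<alpha>) auto

lemma comp_sum_list_eq_0_iff: "is_comp \<alpha> \<Longrightarrow> sum_list \<alpha> = 0 \<longleftrightarrow> \<alpha> = []"
  by (cases \<alpha>) auto

lemma comp_set_eq_image: "comp_set \<alpha> = (\<lambda>i. sum_list (take i \<alpha>)) ` {1..<length \<alpha>}"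
  by (auto simp: comp_set_def)

lemma comp_set_Nil [simp]: "comp_set [] = {}"
  by (simp add: comp_set_def)

lemma comp_set_Cons:
  "comp_set (x # \<gamma>) = (if \<gamma> = [] then {} else insert x ((+) x ` comp_set \<gamma>))"
proof (cases "\<gamma> = []")
  case False
  then have "{0..<length \<gamma>} = insert 0 {1..<length \<gamma>}"
    by auto
  then have "{1..<length (x # \<gamma>)} = Suc ` insert 0 {1..<length \<gamma>}"
    by (metis image_Suc_atLeastLessThan One_nat_def length_Cons)
  then show ?thesis
    unfolding comp_set_eq_image using False
    by (simp only: image_image image_insert take_Suc_Cons take_0 sum_list.Cons sum_list.Nil
        add_0_right if_False)
qed (simp add: comp_set_def)

lemma comp_set_subset: "is_comp \<alpha> \<Longrightarrow> comp_set \<alpha> \<subseteq> {0<..<sum_list \<alpha>}"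
proof (induction \<alpha>)
  case (Cons x \<alpha>)
  then show ?case
    using comp_sum_list_pos[of \<alpha>] by (auto simp: comp_set_Cons)
qed simp

lemma near_concat_Nil_left [simp]: "near_concat [] \<beta> = \<beta>"
  by (simp add: near_concat_def)

lemma near_concat_Nil_right [simp]: "near_concat \<alpha> [] = \<alpha>"
  by (simp add: near_concat_def)

lemma near_concat_singleton: "\<beta> \<noteq> [] \<Longrightarrow> near_concat [x] \<beta> = (x + hd \<beta>) # tl \<beta>"
  by (simp add: near_concat_def)

lemma near_concat_Cons: "\<alpha> \<noteq> [] \<Longrightarrow> near_concat (x # \<alpha>) \<beta> = x # near_concat \<alpha> \<beta>"
  by (simp add: near_concat_def)

lemma near_concat_eq_Nil_iff [simp]: "near_concat \<alpha> \<beta> = [] \<longleftrightarrow> \<alpha> = [] \<and> \<beta> = []"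
  by (simp add: near_concat_def)

lemma sum_list_near_concat: "sum_list (near_concat \<alpha> \<beta>) = sum_list \<alpha> + sum_list \<beta>"
proof (induction \<alpha>)
  case (Cons x \<alpha>)
  then show ?case
    by (cases "\<alpha> = []"; cases \<beta>) (auto simp: near_concat_singleton near_concat_Cons)
qed simp

lemma comp_set_near_concat:
  assumes "\<alpha> \<noteq> []" "\<beta> \<noteq> []"
  shows "comp_set (near_concat \<alpha> \<beta>) = comp_set \<alpha> \<union> (+) (sum_list \<alpha>) ` comp_set \<beta>"
  using assms(1)
proof (induction \<alpha>)
  case (Cons x \<alpha>)
  show ?case
  proof (cases "\<alpha> = []")
    case True
    then show ?thesis using assms(2)
      by (cases \<beta>) (auto simp: near_concat_singleton comp_set_Cons image_image add.assoc)
  next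
    case False
    then show ?thesis using Cons
      by (auto simp: near_concat_Cons comp_set_Cons image_Un image_image add.assoc)
  qed
qed simp

lemma near_concat_inj:
  assumes "is_comp \<alpha>" "is_comp \<alpha>'" "\<alpha> \<noteq> []" "\<alpha>' \<noteq> []" "\<beta> \<noteq> []" "\<beta>' \<noteq> []"
    and "near_concat \<alpha> \<beta> = near_concat \<alpha>' \<beta>'" "sum_list \<alpha> = sum_list \<alpha>'"
  shows "\<alpha> = \<alpha>' \<and> \<beta> = \<beta>'"
  using assms
proof (induction \<alpha> arbitrary: \<alpha>')
  case (Cons x \<alpha>)
  obtain y \<alpha>'' where \<alpha>': "\<alpha>' = y # \<alpha>''"
    using Cons.prems by (cases \<alpha>') auto
  show ?case
  proof (cases "\<alpha> = []"; cases "\<alpha>'' = []")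
    assume "\<alpha> = []" "\<alpha>'' = []"
    then show ?thesis
      using Cons.prems \<alpha>' by (auto simp: near_concat_singleton) (metis list.collapse)
  next
    assume "\<alpha> = []" "\<alpha>'' \<noteq> []"
    moreover have "0 < sum_list \<alpha>''"
      using Cons.prems \<alpha>' \<open>\<alpha>'' \<noteq> []\<close> comp_sum_list_pos by auto
    ultimately show ?thesis
      using Cons.prems \<alpha>' by (auto simp: near_concat_singleton near_concat_Cons)
  next
    assume "\<alpha> \<noteq> []" "\<alpha>'' = []"
    then have "x # near_concat \<alpha> \<beta> = (y + hd \<beta>') # tl \<beta>'" "x + sum_list \<alpha> = y"
      using Cons.prems \<alpha>' by (simp_all add: near_concat_singleton near_concat_Cons)
    moreover have "0 < sum_list \<alpha>"
      using Cons.prems \<open>\<alpha> \<noteq> []\<close> comp_sum_list_pos by auto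
    ultimately show ?thesis
      by simp
  next
    assume "\<alpha> \<noteq> []" "\<alpha>'' \<noteq> []"
    then show ?thesis
      using Cons.prems Cons.IH[of \<alpha>''] \<alpha>' by (auto simp: near_concat_Cons)
  qed
qed simp

lemma near_concat_split_exists:
  assumes "is_comp \<gamma>" "0 < k" "k < sum_list \<gamma>" "k \<notin> comp_set \<gamma>"
  shows "\<exists>\<alpha> \<beta>. is_comp \<alpha> \<and> is_comp \<beta> \<and> near_concat \<alpha> \<beta> = \<gamma> \<and> sum_list \<alpha> = k"
  using assms
proof (induction \<gamma> arbitrary: k)
  case (Cons x \<gamma>)
  consider "k < x" | "x < k" | "k = x" by linarith
  then show ?case
  proof cases
    case 1
    then show ?thesis
      using Cons.prems
      by (intro exI[of _ "[k]"] exI[of _ "(x - k) # \<gamma>"]) (auto simp: near_concat_singleton)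
  next
    case 2
    with Cons.prems obtain \<alpha> \<beta> where "is_comp \<alpha>" "is_comp \<beta>" "near_concat \<alpha> \<beta> = \<gamma>"
      "sum_list \<alpha> = k - x"
      using Cons.IH[of "k - x"] by (force simp: comp_set_Cons split: if_splits)
    moreover from this 2 have "\<alpha> \<noteq> []"
      by auto
    ultimately have "is_comp (x # \<alpha>) \<and> is_comp \<beta> \<and> near_concat (x # \<alpha>) \<beta> = x # \<gamma>
        \<and> sum_list (x # \<alpha>) = k"
      using 2 Cons.prems by (auto simp: near_concat_Cons)
    then show ?thesis
      by blast
  next
    case 3
    then show ?thesis
      using Cons.prems by (auto simp: comp_set_Cons split: if_splits)
  qed
qed simp

definition comp_splits :: "nat list \<Rightarrow> nat \<Rightarrow> (nat list \<times> nat list) set" where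
  "comp_splits \<gamma> k = {(\<alpha>, \<beta>). is_comp \<alpha> \<and> is_comp \<beta> \<and> near_concat \<alpha> \<beta> = \<gamma> \<and> sum_list \<alpha> = k}"

lemma comp_splits_0: "is_comp \<gamma> \<Longrightarrow> comp_splits \<gamma> 0 = {([], \<gamma>)}"
  by (auto simp: comp_splits_def comp_sum_list_eq_0_iff simp del: sum_list_eq_0_iff)

lemma comp_splits_sum_list: "is_comp \<gamma> \<Longrightarrow> comp_splits \<gamma> (sum_list \<gamma>) = {(\<gamma>, [])}"
  by (auto simp: comp_splits_def sum_list_near_concat comp_sum_list_eq_0_iff simp del: sum_list_eq_0_iff)

lemma comp_splits_interior_not_Nil:
  assumes "(\<alpha>, \<beta>) \<in> comp_splits \<gamma> k" "0 < k" "k < sum_list \<gamma>"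
  shows "\<alpha> \<noteq> []" "\<beta> \<noteq> []"
  using assms sum_list_near_concat[of \<alpha> \<beta>] by (auto simp: comp_splits_def)

lemma comp_set_of_comp_splits:
  assumes "(\<alpha>, \<beta>) \<in> comp_splits \<gamma> k" "0 < k" "k < sum_list \<gamma>"
  shows "comp_set \<gamma> = comp_set \<alpha> \<union> (+) k ` comp_set \<beta>"
    and "comp_set \<alpha> \<subseteq> {..<k}" "0 \<notin> comp_set \<beta>"
proof -
  have split: "is_comp \<alpha>" "is_comp \<beta>" "near_concat \<alpha> \<beta> = \<gamma>" "sum_list \<alpha> = k"
    using assms(1) by (auto simp: comp_splits_def)
  show "comp_set \<gamma> = comp_set \<alpha> \<union> (+) k ` comp_set \<beta>"
    using comp_set_near_concat[OF comp_splits_interior_not_Nil[OF assms]] split by simp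
  show "comp_set \<alpha> \<subseteq> {..<k}" "0 \<notin> comp_set \<beta>"
    using comp_set_subset[of \<alpha>] comp_set_subset[of \<beta>] split by auto
qed

lemma comp_splits_interior_cases:
  assumes "is_comp \<gamma>" "0 < k" "k < sum_list \<gamma>"
  obtains "comp_splits \<gamma> k = {}" "k \<in> comp_set \<gamma>"
  | \<alpha> \<beta> where "comp_splits \<gamma> k = {(\<alpha>, \<beta>)}"
proof (cases "k \<in> comp_set \<gamma>")
  case True
  have "k \<notin> comp_set \<gamma>" if "p \<in> comp_splits \<gamma> k" for p
  proof (cases p)
    case (Pair \<alpha> \<beta>)
    then show ?thesis
      using comp_set_of_comp_splits[of \<alpha> \<beta> \<gamma> k] that assms by auto
  qed
  with True that(1) show ?thesis
    by blast
next
  case False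
  then obtain \<alpha> \<beta> where split: "(\<alpha>, \<beta>) \<in> comp_splits \<gamma> k"
    using near_concat_split_exists[OF assms False] by (auto simp: comp_splits_def)
  have "p = (\<alpha>, \<beta>)" if p: "p \<in> comp_splits \<gamma> k" for p
  proof -
    obtain \<alpha>' \<beta>' where split': "p = (\<alpha>', \<beta>')" "(\<alpha>', \<beta>') \<in> comp_splits \<gamma> k"
      using p by (cases p) auto
    then have "is_comp \<alpha>'" "is_comp \<alpha>" "near_concat \<alpha>' \<beta>' = near_concat \<alpha> \<beta>"
      "sum_list \<alpha>' = sum_list \<alpha>"
      using split by (auto simp: comp_splits_def)
    with comp_splits_interior_not_Nil[OF split assms(2,3)]
      comp_splits_interior_not_Nil[OF split'(2) assms(2,3)]
    show ?thesis
      using near_concat_inj split'(1) by blast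
  qed
  with split that(2) show ?thesis
    by blast
qed

lemma Un_image_add_eq_iff:
  fixes A A' B B' :: "nat set"
  assumes "A \<subseteq> {..<k}" "A' \<subseteq> {..<k}"
  shows "A \<union> (+) k ` B = A' \<union> (+) k ` B' \<longleftrightarrow> A = A' \<and> B = B'"
proof
  assume eq: "A \<union> (+) k ` B = A' \<union> (+) k ` B'"
  have "A = (A \<union> (+) k ` B) \<inter> {..<k}" "A' = (A' \<union> (+) k ` B') \<inter> {..<k}"
    using assms by auto
  moreover have "(+) k ` B = (A \<union> (+) k ` B) \<inter> {k..}" "(+) k ` B' = (A' \<union> (+) k ` B') \<inter> {k..}"
    using assms by auto
  ultimately show "A = A' \<and> B = B'"
    using eq by (simp add: inj_image_eq_iff)
qed simp

lemma kappa_Nil [simp]: "kappa {} [] = 1"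
  by (simp add: kappa_def)

lemma kappa_append_zero_eq_sum_comp_splits:
  assumes "is_comp \<gamma>" "0 < k" "k < sum_list \<gamma>" "length a = k - 1"
  shows "kappa (comp_set \<gamma>) (a @ 0 # b) =
    (\<Sum>(\<alpha>, \<beta>) \<in> comp_splits \<gamma> k. kappa (comp_set \<alpha>) a * kappa (comp_set \<beta>) b)"
proof -
  have supp_ab: "supp (a @ 0 # b) = supp a \<union> (+) k ` supp b"
    using supp_append_zero[of a b] assms(2,4) by simp
  have supp_a: "supp a \<subseteq> {..<k}"
    using supp_subset[of a] assms(2,4) by fastforce
  have supp_b: "0 \<notin> supp b"
    using supp_subset[of b] by auto
  from assms(1-3) show ?thesis
  proof (cases rule: comp_splits_interior_cases)
    case 1
    then have "supp (a @ 0 # b) \<noteq> comp_set \<gamma>"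
      using supp_ab supp_a supp_b by auto
    with 1 show ?thesis
      by (simp add: kappa_conv_supp)
  next
    case (2 \<alpha> \<beta>)
    then have "(\<alpha>, \<beta>) \<in> comp_splits \<gamma> k"
      by simp
    note split = comp_set_of_comp_splits[OF this assms(2,3)]
    have "supp (a @ 0 # b) = comp_set \<gamma> \<longleftrightarrow> supp a = comp_set \<alpha> \<and> supp b = comp_set \<beta>"
      unfolding supp_ab split(1) using Un_image_add_eq_iff[OF supp_a split(2)] .
    with 2 show ?thesis
      by (simp add: kappa_conv_supp)
  qed
qed

theorem proposition3p17:
  fixes \<nu> n k :: nat and \<gamma> a b :: "nat list"
  assumes "\<nu> > 1"
    and "is_comp \<gamma>" and "sum_list \<gamma> = n"
    and "k \<le> n" and "a \<in> Q \<nu> k" and "b \<in> Q \<nu> (n - k)"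
  shows "(coprod_k n (kappa (comp_set \<gamma>)) k a b :: 'r::comm_ring_1) =
    (\<Sum>(\<alpha>, \<beta>) \<in> {(\<alpha>, \<beta>). is_comp \<alpha> \<and> is_comp \<beta> \<and> near_concat \<alpha> \<beta> = \<gamma> \<and> sum_list \<alpha> = k}.
        kappa (comp_set \<alpha>) a * kappa (comp_set \<beta>) b)"
proof -
  have a: "length a = k - 1" and b: "length b = n - k - 1"
    using assms(5,6) by (auto simp: Q_def)
  consider "k = 0" | "k = n" "0 < k" | "0 < k" "k < n"
    using assms(4) by linarith
  then have "coprod_k n (kappa (comp_set \<gamma>)) k a b =
    (\<Sum>(\<alpha>, \<beta>) \<in> comp_splits \<gamma> k. kappa (comp_set \<alpha>) a * kappa (comp_set \<beta>) b :: 'r)"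
  proof cases
    case 1
    with a show ?thesis
      using comp_splits_0[OF assms(2)] by (simp add: coprod_k_def)
  next
    case 2
    with b show ?thesis
      using comp_splits_sum_list[OF assms(2)] assms(3) by (simp add: coprod_k_def)
  next
    case 3
    then show ?thesis
      using kappa_append_zero_eq_sum_comp_splits[OF assms(2) _ _ a] assms(3)
      by (simp add: coprod_k_def)
  qed
  then show ?thesis
    by (simp only: comp_splits_def)
qed

end
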